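(* Let $W$ and $A$ be finite sets and $\alpha\colon W\times A\to\Delta_W$ a Markov kernel. Let $f_\alpha\colon\Delta_{W\times A}\to\Delta_{W\times W}$ be the linear map $p(w,a)\mapsto\sum_a p(w,a)\alpha(w'|w,a)$, let $\Xi=\{q\in\Delta_{W\times W}\colon \sum_{w'}q(\cdot,w')=\sum_{w}q(w,\cdot)\}$ be the polytope of joint distributions with equal first and second marginals, and let $J=f_\alpha^{-1}(\Xi)\subseteq\Delta_{W\times A}$. Then each extreme point of $J$ can be written as $p(w,a)=p(w)p(a|w)$, where $p(w)\in\Delta_W$ and $p(a|w)$ is an extreme point of $\Delta_{W,A}$.
   Context: $\Delta_X$ denotes the probability simplex of distributions on a finite set $X$. $\Delta_{W,A}=\prod_{w\in W}\Delta_A$ denotes the polytope of Markov kernels (conditional distributions) $p(a|w)$ from $W$ to $A$; its extreme points are the deterministic kernels $p(a|w)=\delta_{f(w)}(a)$ for functions $f\colon W\to A$. *)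

theory Defs
  imports "HOL-Analysis.Analysis"
begin

definition prob_simplex :: "(real ^ 'x::finite) set" where
  "prob_simplex = {p. (\<forall>x. 0 \<le> p $ x) \<and> (\<Sum>x\<in>UNIV. p $ x) = 1}"

text \<open>Polytope of Markov kernels from W to A; entry k \$ w \$ a is p(a|w).\<close>
definition kernels :: "(real ^ 'a::finite ^ 'w::finite) set" where
  "kernels = {k. \<forall>w. (\<forall>a. 0 \<le> k $ w $ a) \<and> (\<Sum>a\<in>UNIV. k $ w $ a) = 1}"

text \<open>Markov kernel alpha : W x A -> Delta_W, alpha w a w' = alpha(w'|w,a).\<close>
definition markov_kernel :: "('w::finite \<Rightarrow> 'a::finite \<Rightarrow> 'w \<Rightarrow> real) \<Rightarrow> bool" where
  "markov_kernel \<alpha> \<longleftrightarrow> (\<forall>w a. (\<forall>w'. 0 \<le> \<alpha> w a w') \<and> (\<Sum>w'\<in>UNIV. \<alpha> w a w') = 1)"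

definition f_alpha :: "('w::finite \<Rightarrow> 'a::finite \<Rightarrow> 'w \<Rightarrow> real) \<Rightarrow> real ^ ('w \<times> 'a) \<Rightarrow> real ^ ('w \<times> 'w)" where
  "f_alpha \<alpha> p = (\<chi> ww. \<Sum>a\<in>UNIV. p $ (fst ww, a) * \<alpha> (fst ww) a (snd ww))"

definition Xi :: "(real ^ ('w::finite \<times> 'w)) set" where
  "Xi = {q \<in> prob_simplex. \<forall>v. (\<Sum>w'\<in>UNIV. q $ (v, w')) = (\<Sum>w\<in>UNIV. q $ (w, v))}"

definition J :: "('w::finite \<Rightarrow> 'a::finite \<Rightarrow> 'w \<Rightarrow> real) \<Rightarrow> (real ^ ('w \<times> 'a)) set" where
  "J \<alpha> = {p \<in> prob_simplex. f_alpha \<alpha> p \<in> Xi}"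

end

theory Submission
  imports Defs
begin

text \<open>
  J is cut out of the simplex by the balance equations "outflow of v = inflow into v", one per
  state v, and these are redundant: they sum to zero. Let p be an extreme point of J with support
  S and let W' be the set of states carrying mass. Nothing flows from S into a state outside W',
  so on vectors supported by S only the normalisation and the balance equations of W', minus one
  redundant equation, are nontrivial: card W' equations in card S unknowns. If two actions had
  positive mass at the same state, card W' < card S and there would be a nonzero direction d
  supported by S preserving all constraints; p \<plusminus> e d would lie in J for small e > 0,
  contradicting extremality. Hence p(a|w) is deterministic, and deterministic kernels are
  extreme points of the kernel polytope.
\<close>

lemma sum_UNIV_pair:
  "(\<Sum>x\<in>(UNIV::('u::finite \<times> 'v::finite) set). g x) = (\<Sum>u\<in>UNIV. \<Sum>v\<in>UNIV. g (u, v))"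
  by (simp add: sum.cartesian_product flip: UNIV_Times_UNIV)

lemma sum_UNIV_eq_single:
  fixes g :: "'a::finite \<Rightarrow> real"
  assumes "\<And>b. b \<noteq> a \<Longrightarrow> g b = 0"
  shows "(\<Sum>b\<in>UNIV. g b) = g a"
  using assms by (simp add: sum.remove[of UNIV a] sum.neutral)

lemma nonneg_convex_combination_eq_0:
  fixes x y u :: real
  assumes "0 \<le> x" "0 \<le> y" "0 < u" "u < 1" "(1 - u) * x + u * y = 0"
  shows "x = 0 \<and> y = 0"
  using assms by (smt (verit) mult_pos_pos mult_nonneg_nonneg)

definition deterministic_kernel :: "('w::finite \<Rightarrow> 'a::finite) \<Rightarrow> real ^ 'a ^ 'w" where
  "deterministic_kernel g = (\<chi> w. \<chi> a. if a = g w then 1 else 0)"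

lemma deterministic_kernel_extreme_point:
  fixes g :: "'w::finite \<Rightarrow> 'a::finite"
  shows "deterministic_kernel g extreme_point_of kernels"
  unfolding extreme_point_of_def
proof (intro conjI ballI)
  let ?k = "deterministic_kernel g"
  show "?k \<in> kernels" by (simp add: kernels_def deterministic_kernel_def)
  fix x y :: "real ^ 'a ^ 'w"
  assume x: "x \<in> kernels" and y: "y \<in> kernels"
  show "?k \<notin> open_segment x y"
  proof
    assume "?k \<in> open_segment x y"
    then obtain u where "x \<noteq> y" "0 < u" "u < 1" and k: "?k = (1 - u) *\<^sub>R x + u *\<^sub>R y"
      by (auto simp: in_segment)
    have off: "x $ w $ a = 0 \<and> y $ w $ a = 0" if "a \<noteq> g w" for w a
      using nonneg_convex_combination_eq_0[of "x $ w $ a" "y $ w $ a" u] \<open>0 < u\<close> \<open>u < 1\<close>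
        x y that arg_cong[OF k, of "\<lambda>k. k $ w $ a"]
      by (simp add: kernels_def deterministic_kernel_def)
    have on: "x $ w $ g w = 1 \<and> y $ w $ g w = 1" for w
      using x y sum_UNIV_eq_single[where g="\<lambda>a. x $ w $ a" and a="g w"]
        sum_UNIV_eq_single[where g="\<lambda>a. y $ w $ a" and a="g w"] off
      by (auto simp: kernels_def)
    have "x = y"
      by (simp add: vec_eq_iff) (metis off on)
    with \<open>x \<noteq> y\<close> show False ..
  qed
qed

lemma extreme_point_of_add_diff:
  fixes p d :: "'a::real_vector"
  assumes "p extreme_point_of S" "p + d \<in> S" "p - d \<in> S"
  shows "d = 0"
proof (rule ccontr)
  assume "d \<noteq> 0"
  then have "p + d \<noteq> p - d"
    by (metis add_left_cancel diff_conv_add_uminus add.right_inverse scaleR_2 scaleR_eq_0_iff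
        zero_neq_numeral)
  then have "midpoint (p + d) (p - d) \<in> open_segment (p + d) (p - d)"
    by (simp add: midpoint_in_open_segment)
  moreover have "midpoint (p + d) (p - d) = p"
    by (simp add: midpoint_def algebra_simps flip: scaleR_add_left)
  ultimately show False
    using assms unfolding extreme_point_of_def by auto
qed

lemma nonneg_perturbation_exists:
  fixes p d :: "real ^ 'n"
  assumes "\<And>x. 0 \<le> p $ x" "\<And>x. p $ x = 0 \<Longrightarrow> d $ x = 0"
  obtains e where "0 < e" "\<And>x. 0 \<le> (p + e *\<^sub>R d) $ x" "\<And>x. 0 \<le> (p - e *\<^sub>R d) $ x"
proof
  define e where "e = Min (insert 1 ((\<lambda>x. p $ x / (\<bar>d $ x\<bar> + 1)) ` {x. 0 < p $ x}))"
  show "0 < e"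
    unfolding e_def by (auto intro!: divide_pos_pos)
  have bound: "\<bar>e * d $ x\<bar> \<le> p $ x" for x
  proof (cases "0 < p $ x")
    case True
    then have "e \<le> p $ x / (\<bar>d $ x\<bar> + 1)"
      unfolding e_def by (intro Min_le) auto
    then have "e * (\<bar>d $ x\<bar> + 1) \<le> p $ x"
      by (simp add: pos_le_divide_eq add_pos_nonneg)
    with \<open>0 < e\<close> show ?thesis by (simp add: abs_mult algebra_simps)
  next
    case False
    then show ?thesis using assms[of x] by simp
  qed
  show "0 \<le> (p + e *\<^sub>R d) $ x" "0 \<le> (p - e *\<^sub>R d) $ x" for x
    using bound[of x] by (auto simp: abs_le_iff)
qed

lemma linear_kernel_nontrivial:
  fixes f :: "'a::euclidean_space \<Rightarrow> 'b::euclidean_space"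
  assumes "linear f" "subspace V" "f ` V \<subseteq> U" "dim U < dim V"
  obtains x where "x \<in> V" "x \<noteq> 0" "f x = 0"
proof -
  have "\<not> inj_on f V"
  proof
    assume "inj_on f V"
    then have "dim (f ` V) = dim V"
      using assms(1,2) by (metis dim_image_eq span_eq_iff)
    moreover have "dim (f ` V) \<le> dim U"
      using assms(3) by (rule dim_subset)
    ultimately show False using assms(4) by simp
  qed
  then show ?thesis
    using that linear_injective_on_subspace_0[OF assms(1,2)] by blast
qed

text \<open>Mass at v minus inflow into v; for a Markov kernel the mass at v is also its outflow.\<close>

definition flow_balance ::
    "('w::finite \<Rightarrow> 'a::finite \<Rightarrow> 'w \<Rightarrow> real) \<Rightarrow> real ^ ('w \<times> 'a) \<Rightarrow> 'w \<Rightarrow> real"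
  where "flow_balance \<alpha> d v =
    (\<Sum>a\<in>UNIV. d $ (v, a)) - (\<Sum>w\<in>UNIV. \<Sum>a\<in>UNIV. d $ (w, a) * \<alpha> w a v)"

lemma linear_flow_balance: "linear (\<lambda>d. flow_balance \<alpha> d v)"
  by (rule linearI)
    (simp_all add: flow_balance_def sum.distrib sum_distrib_left algebra_simps sum_subtractf)

lemma sum_mult_markov_kernel:
  assumes "markov_kernel \<alpha>"
  shows "(\<Sum>w'\<in>UNIV. d * \<alpha> w a w') = d"
  using assms by (simp add: markov_kernel_def flip: sum_distrib_left)

lemma sum_flow_balance:
  assumes "markov_kernel \<alpha>"
  shows "(\<Sum>v\<in>UNIV. flow_balance \<alpha> d v) = 0"
proof -
  have "(\<Sum>v\<in>UNIV. \<Sum>w\<in>UNIV. \<Sum>a\<in>UNIV. d $ (w, a) * \<alpha> w a v)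
      = (\<Sum>w\<in>UNIV. \<Sum>a\<in>UNIV. \<Sum>v\<in>UNIV. d $ (w, a) * \<alpha> w a v)"
    by (subst sum.swap) (rule sum.cong[OF refl], rule sum.swap)
  then show ?thesis
    using assms by (simp add: flow_balance_def sum_subtractf sum_mult_markov_kernel)
qed

lemma f_alpha_first_marginal:
  assumes "markov_kernel \<alpha>"
  shows "(\<Sum>w'\<in>UNIV. f_alpha \<alpha> q $ (v, w')) = (\<Sum>a\<in>UNIV. q $ (v, a))"
proof -
  have "(\<Sum>w'\<in>UNIV. f_alpha \<alpha> q $ (v, w')) = (\<Sum>w'\<in>UNIV. \<Sum>a\<in>UNIV. q $ (v, a) * \<alpha> v a w')"
    by (simp add: f_alpha_def)
  also have "\<dots> = (\<Sum>a\<in>UNIV. \<Sum>w'\<in>UNIV. q $ (v, a) * \<alpha> v a w')"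
    by (rule sum.swap)
  finally show ?thesis
    using assms by (simp add: sum_mult_markov_kernel)
qed

lemma f_alpha_in_prob_simplex:
  assumes "markov_kernel \<alpha>" "q \<in> prob_simplex"
  shows "f_alpha \<alpha> q \<in> prob_simplex"
  using assms f_alpha_first_marginal[OF assms(1)]
  by (auto simp: prob_simplex_def sum_UNIV_pair markov_kernel_def f_alpha_def intro!: sum_nonneg)

lemma J_iff_flow_balance:
  assumes "markov_kernel \<alpha>"
  shows "q \<in> J \<alpha> \<longleftrightarrow> q \<in> prob_simplex \<and> (\<forall>v. flow_balance \<alpha> q v = 0)"
  using f_alpha_in_prob_simplex[OF assms] f_alpha_first_marginal[OF assms]
  by (auto simp: J_def Xi_def flow_balance_def f_alpha_def)

lemma inflow_vanishes_outside_support: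
  assumes "markov_kernel \<alpha>" "q \<in> J \<alpha>" "q $ (w, a) \<noteq> 0" "\<And>b. q $ (v, b) = 0"
  shows "\<alpha> w a v = 0"
proof -
  have q_nonneg: "0 \<le> q $ x" for x
    using assms(2) unfolding J_def prob_simplex_def by blast
  have "flow_balance \<alpha> q v = 0"
    using assms(1,2) J_iff_flow_balance by blast
  then have "(\<Sum>x\<in>UNIV. q $ x * \<alpha> (fst x) (snd x) v) = 0"
    using assms(4) by (simp add: sum_UNIV_pair flow_balance_def)
  moreover have "\<And>x. 0 \<le> q $ x * \<alpha> (fst x) (snd x) v"
    using q_nonneg assms(1) by (simp add: markov_kernel_def)
  ultimately have "q $ (w, a) * \<alpha> w a v = 0"
    using sum_nonneg_eq_0_iff[of UNIV "\<lambda>x. q $ x * \<alpha> (fst x) (snd x) v"] by force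
  with assms(3) show ?thesis by simp
qed

lemma balanced_direction_exists:
  fixes p :: "real ^ ('w::finite \<times> 'a::finite)"
  assumes \<alpha>: "markov_kernel \<alpha>" and pJ: "p \<in> J \<alpha>"
    and not_inj: "\<not> inj_on fst {x. p $ x \<noteq> 0}"
  obtains d where "d \<noteq> 0" "\<And>x. p $ x = 0 \<Longrightarrow> d $ x = 0" "(\<Sum>x\<in>UNIV. d $ x) = 0"
    "\<And>v. flow_balance \<alpha> d v = 0"
proof -
  define S where "S = {x. p $ x \<noteq> 0}"
  have card_lt: "card (fst ` S) < card S"
    using not_inj card_image_le[of S fst] inj_on_iff_eq_card[of S fst] by (simp add: S_def)
  have "(\<Sum>x\<in>UNIV. p $ x) = 1"
    using pJ by (simp add: J_def prob_simplex_def)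
  then obtain x0 where "x0 \<in> S"
    unfolding S_def by (metis (mono_tags, lifting) mem_Collect_eq sum.neutral zero_neq_one)
  define v0 where "v0 = fst x0"
  \<comment> \<open>The balance equation at v0 follows from the others, so its slot carries the normalisation.\<close>
  define L :: "real ^ ('w \<times> 'a) \<Rightarrow> real ^ 'w" where
    "L d = (\<chi> v. if v = v0 then \<Sum>x\<in>UNIV. d $ x else flow_balance \<alpha> d v)" for d
  have "linear L"
    by (rule linearI) (simp_all add: L_def vec_eq_iff flow_balance_def sum.distrib
        sum_distrib_left algebra_simps sum_subtractf)
  define V where "V = {d :: real ^ ('w \<times> 'a). \<forall>x. x \<notin> S \<longrightarrow> d $ x = 0}"
  define U where "U = {u :: real ^ 'w. \<forall>v. v \<notin> fst ` S \<longrightarrow> u $ v = 0}"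
  have "subspace V"
    by (auto simp: V_def subspace_def)
  have "dim U < dim V"
    using card_lt unfolding U_def V_def dim_vec_eq[symmetric] dim_substandard_cart .
  have "L ` V \<subseteq> U"
  proof (clarsimp simp: U_def)
    fix d v assume d: "d \<in> V" and v: "v \<notin> fst ` S"
    have inflow: "d $ (w, a) * \<alpha> w a v = 0" for w a
      using d v inflow_vanishes_outside_support[OF \<alpha> pJ, of w a v]
      by (force simp: V_def S_def)
    have "v \<noteq> v0" and mass: "d $ (v, a) = 0" for a
      using d v \<open>x0 \<in> S\<close> by (force simp: V_def v0_def)+
    then show "L d $ v = 0"
      by (simp add: L_def flow_balance_def inflow mass)
  qed
  then obtain d where "d \<in> V" "d \<noteq> 0" "L d = 0"
    using linear_kernel_nontrivial[OF \<open>linear L\<close> \<open>subspace V\<close> _ \<open>dim U < dim V\<close>] by blast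
  then have Ld: "L d $ v = 0" for v
    by simp
  have sum_d: "(\<Sum>x\<in>UNIV. d $ x) = 0"
    using Ld[of v0] by (simp add: L_def)
  have balance_off_v0: "flow_balance \<alpha> d v = 0" if "v \<noteq> v0" for v
    using Ld[of v] that by (simp add: L_def)
  have "flow_balance \<alpha> d v = 0" for v
    using balance_off_v0 sum_flow_balance[OF \<alpha>, of d]
      sum_UNIV_eq_single[where g="flow_balance \<alpha> d" and a=v0]
    by (cases "v = v0") auto
  with \<open>d \<in> V\<close> \<open>d \<noteq> 0\<close> sum_d show ?thesis
    using that by (auto simp: V_def S_def)
qed

lemma extreme_point_J_support_inj_fst:
  assumes \<alpha>: "markov_kernel \<alpha>" and ext: "p extreme_point_of J \<alpha>"
  shows "inj_on fst {x. p $ x \<noteq> 0}"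
proof (rule ccontr)
  assume "\<not> inj_on fst {x. p $ x \<noteq> 0}"
  have pJ: "p \<in> J \<alpha>"
    using ext by (simp add: extreme_point_of_def)
  then have p_simplex: "p \<in> prob_simplex" and p_balanced: "\<And>v. flow_balance \<alpha> p v = 0"
    using J_iff_flow_balance[OF \<alpha>] by auto
  obtain d where "d \<noteq> 0" and d_supp: "\<And>x. p $ x = 0 \<Longrightarrow> d $ x = 0"
    and sum_d: "(\<Sum>x\<in>UNIV. d $ x) = 0" and d_balanced: "\<And>v. flow_balance \<alpha> d v = 0"
    using balanced_direction_exists[OF \<alpha> pJ \<open>\<not> inj_on fst _\<close>] by blast
  obtain e :: real where "0 < e"
    and nonneg: "\<And>x. 0 \<le> (p + e *\<^sub>R d) $ x" "\<And>x. 0 \<le> (p - e *\<^sub>R d) $ x"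
    using nonneg_perturbation_exists[of p d] p_simplex d_supp by (auto simp: prob_simplex_def)
  have perturbed_in_J: "p + c *\<^sub>R d \<in> J \<alpha>" if "\<And>x. 0 \<le> (p + c *\<^sub>R d) $ x" for c
  proof -
    have "flow_balance \<alpha> (p + c *\<^sub>R d) v = 0" for v
      using linear_add[OF linear_flow_balance[of \<alpha> v], of p "c *\<^sub>R d"]
        linear_scale[OF linear_flow_balance[of \<alpha> v], of c d] p_balanced d_balanced
      by simp
    moreover have "(\<Sum>x\<in>UNIV. (p + c *\<^sub>R d) $ x) = 1"
      using p_simplex sum_d by (simp add: prob_simplex_def sum.distrib flip: sum_distrib_left)
    ultimately show ?thesis
      using that J_iff_flow_balance[OF \<alpha>] by (simp add: prob_simplex_def)
  qed
  have "p + e *\<^sub>R d \<in> J \<alpha>"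
    using nonneg(1) by (rule perturbed_in_J)
  moreover have "p - e *\<^sub>R d \<in> J \<alpha>"
    using perturbed_in_J[of "- e"] nonneg(2) by simp
  ultimately have "e *\<^sub>R d = 0"
    by (rule extreme_point_of_add_diff[OF ext])
  with \<open>0 < e\<close> \<open>d \<noteq> 0\<close> show False
    by simp
qed

lemma deterministic_factorization_of_support_inj_fst:
  fixes p :: "real ^ ('w::finite \<times> 'a::finite)"
  assumes "inj_on fst {x. p $ x \<noteq> 0}"
  obtains g where "\<And>w a. p $ (w, a) = (\<Sum>b\<in>UNIV. p $ (w, b)) * deterministic_kernel g $ w $ a"
proof
  define g where "g w = (SOME a. p $ (w, a) \<noteq> 0)" for w
  fix w a
  show "p $ (w, a) = (\<Sum>b\<in>UNIV. p $ (w, b)) * deterministic_kernel g $ w $ a"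
  proof (cases "\<exists>b. p $ (w, b) \<noteq> 0")
    case True
    then have "p $ (w, g w) \<noteq> 0"
      unfolding g_def by (rule someI_ex)
    then have off: "p $ (w, b) = 0" if "b \<noteq> g w" for b
      using assms that by (auto simp: inj_on_def)
    then show ?thesis
      using sum_UNIV_eq_single[where g="\<lambda>b. p $ (w, b)" and a="g w"]
      by (auto simp: deterministic_kernel_def)
  qed (simp add: deterministic_kernel_def)
qed

theorem lemma2:
  fixes \<alpha> :: "'w::finite \<Rightarrow> 'a::finite \<Rightarrow> 'w \<Rightarrow> real"
    and p :: "real ^ ('w \<times> 'a)"
  assumes "markov_kernel \<alpha>"
    and "p extreme_point_of J \<alpha>"
  shows "\<exists>(pw :: real ^ 'w) (k :: real ^ 'a ^ 'w).
           pw \<in> prob_simplex \<and> k extreme_point_of kernels \<and>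
           (\<forall>w a. p $ (w, a) = pw $ w * k $ w $ a)"
proof -
  obtain g where
    factor: "\<And>w a. p $ (w, a) = (\<Sum>b\<in>UNIV. p $ (w, b)) * deterministic_kernel g $ w $ a"
    using deterministic_factorization_of_support_inj_fst extreme_point_J_support_inj_fst[OF assms]
    by blast
  define pw :: "real ^ 'w" where "pw = (\<chi> w. \<Sum>b\<in>UNIV. p $ (w, b))"
  have "p \<in> prob_simplex"
    using assms(2) by (simp add: extreme_point_of_def J_def)
  then have "pw \<in> prob_simplex"
    by (auto simp: prob_simplex_def pw_def sum_UNIV_pair intro!: sum_nonneg)
  moreover have "p $ (w, a) = pw $ w * deterministic_kernel g $ w $ a" for w a
    unfolding pw_def vec_lambda_beta by (rule factor)
  ultimately show ?thesis
    using deterministic_kernel_extreme_point by blast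
qed

end
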